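(* Let $M=(v_1,\dots,v_n)$ be a finite list of nonzero vectors generating $\mathbb{F}_2^3$ which is generic, i.e. $\sum_{i=1}^n v_i\ne\mathbf{0}$. Let $\lambda_u=n-\sum_{i=1}^n(-1)^{u\cdot v_i}$ for $u\in\mathbb{F}_2^3\setminus\{0\}$ and let $d_1\le\cdots\le d_7$ be the numbers $v_2(\lambda_u)$, $u\ne 0$, in increasing order. Then $d_1=d_2=d_3=d_4=1$ and $d_5,d_6,d_7>1$.
   Context: The $\lambda_u$ are the nonzero eigenvalues of the Laplacian of the Cayley graph $G(\mathbb{F}_2^3,M)$ (the matrix indexed by $\mathbb{F}_2^3$ with diagonal entries $n$ and $(u,w)$-entry $-\#\{i:u+v_i=w\}$ for $u\ne w$). $v_2$ is the $2$-adic valuation. *)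

theory Defs
  imports "HOL-Analysis.Analysis" "HOL-Library.Z2" "HOL-Library.Multiset"
          "HOL-Computational_Algebra.Factorial_Ring"
begin

definition dotF2 :: "bit^3 \<Rightarrow> bit^3 \<Rightarrow> bit" where
  "dotF2 u v = (\<Sum>i\<in>UNIV. u $ i * v $ i)"

definition generatesF2 :: "(bit^3) list \<Rightarrow> bool" where
  "generatesF2 M \<longleftrightarrow> (\<forall>w :: bit^3. \<exists>c :: nat \<Rightarrow> bit.
      w = (\<Sum>i<length M. c i *s (M ! i)))"

definition lam :: "(bit^3) list \<Rightarrow> bit^3 \<Rightarrow> int" where
  "lam M u = int (length M) - (\<Sum>v\<leftarrow>M. (if dotF2 u v = 0 then 1 else -1))"

text \<open>The 2-adic valuations v_2(lambda_u), u nonzero, sorted increasingly: d_1,...,d_7 are entries 0..6.\<close>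
definition dseq :: "(bit^3) list \<Rightarrow> nat list" where
  "dseq M = sorted_list_of_multiset
      (image_mset (\<lambda>u. multiplicity (2::int) (lam M u)) (mset_set (UNIV - {0 :: bit^3})))"

end

theory Submission
  imports Defs
begin

text \<open>Writing \<open>k\<^sub>u\<close> for the number of \<open>v\<^sub>i\<close> with \<open>u \<cdot> v\<^sub>i = 1\<close>, we have \<open>\<lambda>\<^sub>u = 2 k\<^sub>u\<close>, and
  \<open>k\<^sub>u > 0\<close> for \<open>u \<noteq> 0\<close> because the \<open>v\<^sub>i\<close> generate. Hence \<open>v\<^sub>2(\<lambda>\<^sub>u) \<ge> 1\<close>, with equality iff
  \<open>k\<^sub>u\<close> is odd, i.e. iff \<open>u \<cdot> s = 1\<close> for \<open>s = \<Sum>\<^sub>i v\<^sub>i\<close>. Since \<open>s \<noteq> 0\<close>, exactly half of the eight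
  vectors \<open>u\<close> satisfy \<open>u \<cdot> s = 1\<close>, and none of them is \<open>0\<close>.\<close>

lemma UNIV_bit: "(UNIV :: bit set) = {0, 1}"
  by auto

instance bit :: finite
  by standard (simp add: UNIV_bit)

lemma card_bit: "CARD(bit) = 2"
  by (simp add: UNIV_bit)

lemma dotF2_commute: "dotF2 u v = dotF2 v u"
  unfolding dotF2_def by (simp only: mult.commute)

lemma dotF2_zero_right [simp]: "dotF2 u 0 = 0"
  unfolding dotF2_def by simp

lemma dotF2_zero_left [simp]: "dotF2 0 v = 0"
  by (simp add: dotF2_commute[of 0])

lemma dotF2_add_right: "dotF2 u (v + w) = dotF2 u v + dotF2 u w"
  unfolding dotF2_def by (simp only: vector_add_component distrib_left sum.distrib)

lemma dotF2_scale_right: "dotF2 u (c *s v) = c * dotF2 u v"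
  unfolding dotF2_def by (simp only: vector_smult_component sum_distrib_left mult.left_commute)

lemma dotF2_sum_right: "dotF2 u (\<Sum>i\<in>A. f i) = (\<Sum>i\<in>A. dotF2 u (f i))"
  by (induction A rule: infinite_finite_induct) (simp_all add: dotF2_add_right)

lemma dotF2_axis_right: "dotF2 u (axis j 1) = u $ j"
  unfolding dotF2_def axis_def by (simp add: if_distrib cong: if_cong)

lemma card_dotF2_eq_1:
  assumes "s \<noteq> 0"
  shows "card {u. dotF2 u s = 1} = 4"
proof -
  obtain j where "s $ j = 1"
    using assms by (auto simp: vec_eq_iff)
  then have flip: "dotF2 (u + axis j 1) s = dotF2 u s + 1" for u
    by (simp add: dotF2_commute[of _ s] dotF2_add_right dotF2_axis_right)
  define H0 where "H0 = {u. dotF2 u s = 0}"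
  define H1 where "H1 = {u. dotF2 u s = 1}"
  have "bij_betw (\<lambda>u. u + axis j 1) H0 H1"
  proof (rule bij_betw_byWitness[where f' = "\<lambda>u. u + axis j 1"])
    show "\<forall>u\<in>H0. u + axis j 1 + axis j 1 = u" "\<forall>u\<in>H1. u + axis j 1 + axis j 1 = u"
      by (simp_all add: vec_eq_iff)
    show "(\<lambda>u. u + axis j 1) ` H0 \<subseteq> H1" "(\<lambda>u. u + axis j 1) ` H1 \<subseteq> H0"
      by (auto simp: H0_def H1_def flip)
  qed
  then have "card H0 = card H1"
    by (rule bij_betw_same_card)
  moreover have "H0 \<union> H1 = UNIV" "H0 \<inter> H1 = {}"
    by (auto simp: H0_def H1_def)
  then have "card H0 + card H1 = 8"
    using card_Un_disjoint[of H0 H1] by (simp add: card_bit)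
  ultimately show ?thesis
    unfolding H1_def by simp
qed

definition count_dotF2_one :: "(bit^3) list \<Rightarrow> bit^3 \<Rightarrow> nat" where
  "count_dotF2_one M u = length (filter (\<lambda>v. dotF2 u v = 1) M)"

lemma lam_eq_double_count: "lam M u = 2 * int (count_dotF2_one M u)"
  unfolding lam_def count_dotF2_one_def by (induction M) auto

lemma dotF2_sum_list_eq_1_iff: "dotF2 u (sum_list M) = 1 \<longleftrightarrow> odd (count_dotF2_one M u)"
  unfolding count_dotF2_one_def by (induction M) (auto simp: dotF2_add_right)

lemma count_dotF2_one_pos:
  assumes "generatesF2 M" "u \<noteq> 0"
  shows "count_dotF2_one M u > 0"
proof (rule ccontr)
  assume "\<not> count_dotF2_one M u > 0"
  then have orth: "\<forall>v\<in>set M. dotF2 u v = 0"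
    unfolding count_dotF2_one_def by (auto simp: filter_empty_conv)
  obtain j where j: "u $ j \<noteq> 0"
    using assms(2) by (auto simp: vec_eq_iff)
  obtain c where c: "axis j 1 = (\<Sum>i<length M. c i *s (M ! i))"
    using assms(1) unfolding generatesF2_def by blast
  have "u $ j = (\<Sum>i<length M. c i * dotF2 u (M ! i))"
    by (simp only: c dotF2_axis_right[symmetric] dotF2_sum_right dotF2_scale_right)
  also have "\<dots> = 0"
    using orth by (auto intro!: sum.neutral)
  finally show False
    using j by contradiction
qed

lemma multiplicity_2_lam:
  assumes "generatesF2 M" "u \<noteq> 0"
  shows "multiplicity (2::int) (lam M u) \<ge> 1"
    and "multiplicity (2::int) (lam M u) = 1 \<longleftrightarrow> dotF2 u (sum_list M) = 1"
proof -
  define k where "k = int (count_dotF2_one M u)"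
  have "k \<noteq> 0"
    using count_dotF2_one_pos[OF assms] by (simp add: k_def)
  then have val: "multiplicity 2 (lam M u) = Suc (multiplicity 2 k)"
    by (simp add: lam_eq_double_count k_def[symmetric] multiplicity_times_same)
  then show "multiplicity (2::int) (lam M u) \<ge> 1"
    by simp
  have "multiplicity 2 k = 0 \<longleftrightarrow> odd k"
    using \<open>k \<noteq> 0\<close> by (simp add: multiplicity_eq_zero_iff)
  then show "multiplicity (2::int) (lam M u) = 1 \<longleftrightarrow> dotF2 u (sum_list M) = 1"
    by (simp add: val dotF2_sum_list_eq_1_iff k_def)
qed

lemma sorted_list_of_multiset_threshold:
  fixes A :: "'a::linorder multiset"
  assumes "filter_mset (\<lambda>x. x \<le> a) A = replicate_mset k a"
  shows "i < k \<Longrightarrow> sorted_list_of_multiset A ! i = a"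
    and "k \<le> i \<Longrightarrow> i < size A \<Longrightarrow> sorted_list_of_multiset A ! i > a"
proof -
  define ys where "ys = sorted_list_of_multiset (filter_mset (\<lambda>x. \<not> x \<le> a) A)"
  have A: "A = replicate_mset k a + mset ys"
    using multiset_partition[of A "\<lambda>x. x \<le> a"] by (simp add: assms ys_def)
  have ys_gt: "\<forall>y\<in>set ys. y > a"
    by (auto simp: ys_def)
  have "sorted (replicate k a @ ys)"
    using ys_gt by (auto simp: sorted_append ys_def)
  moreover have "mset (replicate k a @ ys) = A"
    by (simp add: A)
  ultimately have sorted_A: "sorted_list_of_multiset A = replicate k a @ ys"
    by (metis sorted_list_of_multiset_mset sorted_sort_id)
  show "i < k \<Longrightarrow> sorted_list_of_multiset A ! i = a"
    by (simp add: sorted_A nth_append)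
  assume "k \<le> i" "i < size A"
  then have "ys ! (i - k) \<in> set ys"
    by (simp add: A)
  then show "sorted_list_of_multiset A ! i > a"
    using ys_gt \<open>k \<le> i\<close> by (simp add: sorted_A nth_append)
qed

theorem mainTheorem17:
  fixes M :: "(bit^3) list"
  assumes "\<forall>v\<in>set M. v \<noteq> 0"
    and "generatesF2 M"
    and "sum_list M \<noteq> 0"
  shows "dseq M ! 0 = 1 \<and> dseq M ! 1 = 1 \<and> dseq M ! 2 = 1 \<and> dseq M ! 3 = 1 \<and>
         dseq M ! 4 > 1 \<and> dseq M ! 5 > 1 \<and> dseq M ! 6 > 1"
proof -
  define val where "val u = multiplicity (2::int) (lam M u)" for u
  define S where "S = UNIV - {0 :: bit^3}"
  define A where "A = image_mset val (mset_set S)"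
  have "size A = 7"
    by (simp add: A_def S_def card_Diff_singleton card_bit)
  have "{u \<in> S. val u \<le> 1} = {u. dotF2 u (sum_list M) = 1}"
    using multiplicity_2_lam[OF assms(2)] by (force simp: val_def S_def)
  then have "filter_mset (\<lambda>x. x \<le> 1) A = image_mset val (mset_set {u. dotF2 u (sum_list M) = 1})"
    unfolding A_def by (simp only: filter_mset_image_mset filter_mset_mset_set finite)
  also have "\<dots> = image_mset (\<lambda>_. 1) (mset_set {u. dotF2 u (sum_list M) = 1})"
    using multiplicity_2_lam(2)[OF assms(2)] by (intro image_mset_cong) (force simp: val_def)
  also have "\<dots> = replicate_mset 4 1"
    using card_dotF2_eq_1[OF assms(3)] by (simp add: image_mset_const_eq)
  finally have low: "filter_mset (\<lambda>x. x \<le> 1) A = replicate_mset 4 1" .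
  have "dseq M = sorted_list_of_multiset A"
    unfolding dseq_def A_def S_def val_def ..
  then show ?thesis
    using sorted_list_of_multiset_threshold[OF low] \<open>size A = 7\<close> by simp
qed

end
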